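(* Fix $\mathbf{x} \in \Omega$ and $\alpha \in [0,1)$, and let $C = \{s \in S : s = x_k \text{ for some } k \in \{1,\dots,n\}\}$ be the set of values occurring in $\mathbf{x}$. Then $$B_{T_\ell}^*(\mathbf{x}) = \min\{E[F] : F \in \mathcal{F}_{C^+}(\Omega(\mathbf{x},T_\ell),\alpha)\}.$$
   Context: Fix integers $m \ge 2$, $n \ge 1$ and reals $S_{\min} < S_{\max}$; $S = \{S_0,\dots,S_{m-1}\}$ with $S_k = S_{\min} + k\frac{S_{\max}-S_{\min}}{m-1}$. $\mathcal{F}$ is the set of probability distributions on $S$, identified with the probability simplex in $\mathbb{R}^m$ with the Euclidean topology; $E[F]$ is the mean. $\Omega$ is the set of samples of size $n$ from $S$, identified with their sorted versions $x_{(1)} \le \dots \le x_{(n)}$. $P_F[\Omega']$ is the probability that the sorted sample of $n$ i.i.d. draws from $F$ lies in $\Omega' \subseteq \Omega$; $\mathcal{G}(\Omega',\alpha) = \{F : P_F[\Omega'] > \alpha\}$ and $\mathcal{F}(\Omega',\alpha)$ is its closure. The low lexicographic order $T_\ell$: $\mathbf{x} \le_{T_\ell} \mathbf{y}$ iff $\mathbf{x}=\mathbf{y}$ or at the smallest index $j$ with $x_{(j)} \ne y_{(j)}$ we have $x_{(j)} < y_{(j)}$; $\Omega(\mathbf{x},T_\ell) = \{\mathbf{y} : \mathbf{x} \le_{T_\ell} \mathbf{y}\}$; $B_{T_\ell}^*(\mathbf{x}) = \min\{E[F] : F \in \mathcal{F}(\Omega(\mathbf{x},T_\ell),\alpha)\}$.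 For $C \subseteq S$: $\mathcal{F}_C = \{F \in \mathcal{F} : P_F[X = s] = 0 \ \forall s \in S\setminus C\}$, $\mathcal{G}_C(\Omega',\alpha) = \mathcal{F}_C \cap \mathcal{G}(\Omega',\alpha)$, $\mathcal{F}_C(\Omega',\alpha)$ is the closure of $\mathcal{G}_C(\Omega',\alpha)$, and $C^+ = C \cup \{S_{\min}\} \cup \{S_{j+1} : S_j \in C,\ j \le m-2\}$. *)

theory Defs
  imports "HOL-Analysis.Analysis"
begin

definition Spt :: "nat \<Rightarrow> real \<Rightarrow> real \<Rightarrow> nat \<Rightarrow> real" where
  "Spt m Smin Smax k = Smin + real k * (Smax - Smin) / (real m - 1)"

definition Sset :: "nat \<Rightarrow> real \<Rightarrow> real \<Rightarrow> real set" where
  "Sset m Smin Smax = Spt m Smin Smax ` {..<m}"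

text \<open>Distributions on S: F k is the probability of S_k; identified with the
  simplex in R^m (functions vanishing outside {..<m}, product topology = Euclidean).\<close>
definition Dists :: "nat \<Rightarrow> (nat \<Rightarrow> real) set" where
  "Dists m = {F. (\<forall>k<m. 0 \<le> F k) \<and> (\<forall>k\<ge>m. F k = 0) \<and> (\<Sum>k<m. F k) = 1}"

definition mean :: "nat \<Rightarrow> real \<Rightarrow> real \<Rightarrow> (nat \<Rightarrow> real) \<Rightarrow> real" where
  "mean m Smin Smax F = (\<Sum>k<m. F k * Spt m Smin Smax k)"

definition Samples :: "nat \<Rightarrow> nat \<Rightarrow> real \<Rightarrow> real \<Rightarrow> real list set" where
  "Samples m n Smin Smax = {xs. length xs = n \<and> sorted xs \<and> set xs \<subseteq> Sset m Smin Smax}"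

text \<open>Probability that the sorted sample of n i.i.d. draws from F lies in A.\<close>
definition probS :: "nat \<Rightarrow> nat \<Rightarrow> real \<Rightarrow> real \<Rightarrow> (nat \<Rightarrow> real) \<Rightarrow> real list set \<Rightarrow> real" where
  "probS m n Smin Smax F A =
     (\<Sum>ks\<in>{ks. length ks = n \<and> set ks \<subseteq> {..<m}}.
        (if sort (map (Spt m Smin Smax) ks) \<in> A then prod_list (map F ks) else 0))"

definition Gset :: "nat \<Rightarrow> nat \<Rightarrow> real \<Rightarrow> real \<Rightarrow> real list set \<Rightarrow> real \<Rightarrow> (nat \<Rightarrow> real) set" where
  "Gset m n Smin Smax A \<alpha> = {F \<in> Dists m. probS m n Smin Smax F A > \<alpha>}"

definition Fset :: "nat \<Rightarrow> nat \<Rightarrow> real \<Rightarrow> real \<Rightarrow> real list set \<Rightarrow> real \<Rightarrow> (nat \<Rightarrow> real) set" where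
  "Fset m n Smin Smax A \<alpha> = closure (Gset m n Smin Smax A \<alpha>)"

definition DistsC :: "nat \<Rightarrow> real \<Rightarrow> real \<Rightarrow> real set \<Rightarrow> (nat \<Rightarrow> real) set" where
  "DistsC m Smin Smax C = {F \<in> Dists m. \<forall>k<m. Spt m Smin Smax k \<notin> C \<longrightarrow> F k = 0}"

definition GsetC :: "nat \<Rightarrow> nat \<Rightarrow> real \<Rightarrow> real \<Rightarrow> real set \<Rightarrow> real list set \<Rightarrow> real \<Rightarrow> (nat \<Rightarrow> real) set" where
  "GsetC m n Smin Smax C A \<alpha> = DistsC m Smin Smax C \<inter> Gset m n Smin Smax A \<alpha>"

definition FsetC :: "nat \<Rightarrow> nat \<Rightarrow> real \<Rightarrow> real \<Rightarrow> real set \<Rightarrow> real list set \<Rightarrow> real \<Rightarrow> (nat \<Rightarrow> real) set" where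
  "FsetC m n Smin Smax C A \<alpha> = closure (GsetC m n Smin Smax C A \<alpha>)"

definition Cplus :: "nat \<Rightarrow> real \<Rightarrow> real \<Rightarrow> real set \<Rightarrow> real set" where
  "Cplus m Smin Smax C = C \<union> {Smin} \<union>
     {Spt m Smin Smax (Suc j) | j. j \<le> m - 2 \<and> Spt m Smin Smax j \<in> C}"

definition lowlex_le :: "real list \<Rightarrow> real list \<Rightarrow> bool" where
  "lowlex_le xs ys \<longleftrightarrow> xs = ys \<or>
     (\<exists>j. j < length xs \<and> j < length ys \<and> (\<forall>i<j. xs ! i = ys ! i) \<and> xs ! j < ys ! j)"

definition OmegaT :: "nat \<Rightarrow> nat \<Rightarrow> real \<Rightarrow> real \<Rightarrow> real list \<Rightarrow> real list set" where
  "OmegaT m n Smin Smax xs = {ys \<in> Samples m n Smin Smax. lowlex_le xs ys}"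

text \<open>B*_{T_l}(x) = min {E[F] : F \<in> F(\<Omega>(x,T_l),\<alpha>)} (rendered as Inf; the set is
  compact and nonempty, so the Inf is the minimum).\<close>
definition Bstar :: "nat \<Rightarrow> nat \<Rightarrow> real \<Rightarrow> real \<Rightarrow> real \<Rightarrow> real list \<Rightarrow> real" where
  "Bstar m n Smin Smax \<alpha> xs =
     Inf (mean m Smin Smax ` Fset m n Smin Smax (OmegaT m n Smin Smax xs) \<alpha>)"

end

theory Submission
  imports Defs
begin

text \<open>Round every grid index down to the nearest index whose point lies in C^+; index 0 always
  qualifies because S_min is in C^+. Pushing a distribution forward along this rounding keeps it
  supported on C^+ and does not increase its mean. It also maps Omega(x,T_l) into itself: at the
  first position j where a sample y exceeds x, we have y_(j) > x_(j) = S_k, and S_(k+1) lies in C^+,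
  so y_(j) is not rounded below S_(k+1) > x_(j); at the earlier positions y agrees with x, whose
  values lie in C and are kept. Hence the pushforward maps G(Omega(x,T_l),alpha) into
  G_(C^+)(Omega(x,T_l),alpha), by continuity the closures as well, and the pushforward of a
  minimiser of the mean over the compact set F(Omega(x,T_l),alpha) is a minimiser in
  F_(C^+)(Omega(x,T_l),alpha).\<close>

lemma sort_map_mono:
  assumes "mono f"
  shows "sort (map f xs) = map f (sort xs)"
proof (rule properties_for_sort)
  show "sorted (map f (sort xs))"
    using assms by (simp add: sorted_map monoD sorted_wrt_mono_rel[of _ "(\<le>)"])
qed simp

lemma lowlex_le_Cons:
  "lowlex_le (x # xs) (y # ys) \<longleftrightarrow> x < y \<or> x = y \<and> lowlex_le xs ys"
proof
  assume "lowlex_le (x # xs) (y # ys)"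
  then consider "x # xs = y # ys"
    | j where "j < length (x # xs)" "j < length (y # ys)"
        "\<forall>i<j. (x # xs) ! i = (y # ys) ! i" "(x # xs) ! j < (y # ys) ! j"
    unfolding lowlex_le_def by blast
  then show "x < y \<or> x = y \<and> lowlex_le xs ys"
  proof cases
    case (2 j)
    then show ?thesis
    proof (cases j)
      case (Suc i)
      with 2 have "x = y" and "lowlex_le xs ys"
        by (auto simp: lowlex_le_def) (metis Suc_less_eq nth_Cons_Suc)
      then show ?thesis by blast
    qed simp
  qed (simp add: lowlex_le_def)
next
  assume "x < y \<or> x = y \<and> lowlex_le xs ys"
  then show "lowlex_le (x # xs) (y # ys)"
  proof (elim disjE conjE)
    assume "x < y"
    then show ?thesis unfolding lowlex_le_def by force
  next
    assume "x = y" "lowlex_le xs ys"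
    then consider "xs = ys" | j where "j < length xs" "j < length ys"
        "\<forall>i<j. xs ! i = ys ! i" "xs ! j < ys ! j"
      unfolding lowlex_le_def by blast
    then show ?thesis
    proof cases
      case (2 j)
      then show ?thesis unfolding lowlex_le_def using \<open>x = y\<close>
        by (intro disjI2 exI[of _ "Suc j"]) (auto simp: less_Suc_eq_0_disj)
    qed (simp add: lowlex_le_def \<open>x = y\<close>)
  qed
qed

lemma lowlex_le_replicate:
  assumes "\<And>x. x \<in> set xs \<Longrightarrow> x \<le> t"
  shows "lowlex_le xs (replicate (length xs) t)"
  using assms by (induction xs) (auto simp: lowlex_le_Cons lowlex_le_def[of "[]"] le_less)

lemma lowlex_le_map_replace:
  assumes "lowlex_le xs (map g zs)" "length xs = length zs"
    and "\<And>x z. x \<in> set xs \<Longrightarrow> z \<in> set zs \<Longrightarrow> x = g z \<Longrightarrow> h z = g z"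
    and "\<And>x z. x \<in> set xs \<Longrightarrow> z \<in> set zs \<Longrightarrow> x < g z \<Longrightarrow> x < h z"
  shows "lowlex_le xs (map h zs)"
  using assms(2,1,3,4) by (induction xs zs rule: list_induct2) (auto simp: lowlex_le_Cons)

definition round_down :: "(nat \<Rightarrow> bool) \<Rightarrow> nat \<Rightarrow> nat" where
  "round_down P z = (GREATEST j. j \<le> z \<and> P j)"

context
  fixes P :: "nat \<Rightarrow> bool"
  assumes P0: "P 0"
begin

lemma round_down_le: "round_down P z \<le> z"
  and round_down_sat: "P (round_down P z)"
  unfolding round_down_def using GreatestI_nat[of "\<lambda>j. j \<le> z \<and> P j" 0 z] P0 by auto

lemma le_round_down: "j \<le> z \<Longrightarrow> P j \<Longrightarrow> j \<le> round_down P z"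
  unfolding round_down_def by (rule Greatest_le_nat[of _ j z]) auto

lemma round_down_fixed: "P z \<Longrightarrow> round_down P z = z"
  using round_down_le le_round_down by (simp add: order_antisym)

lemma mono_round_down: "mono (round_down P)"
  by (rule monoI) (meson le_round_down le_trans round_down_le round_down_sat)

end

definition words :: "nat \<Rightarrow> nat \<Rightarrow> nat list set" where
  "words m n = {ks. length ks = n \<and> set ks \<subseteq> {..<m}}"

lemma finite_words: "finite (words m n)"
  unfolding words_def using finite_lists_length_eq[of "{..<m}" n] by (simp add: conj_commute)

lemma sum_words_Suc: "(\<Sum>ks\<in>words m (Suc n). g ks) = (\<Sum>k<m. \<Sum>ks\<in>words m n. g (k # ks))"
proof -
  have "words m (Suc n) = (\<lambda>(k, ks). k # ks) ` ({..<m} \<times> words m n)"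
    unfolding words_def by (auto simp: length_Suc_conv image_iff)
  moreover have "inj_on (\<lambda>(k, ks). k # ks) ({..<m} \<times> words m n)"
    by (auto simp: inj_on_def)
  ultimately show ?thesis
    by (simp add: sum.reindex sum.cartesian_product case_prod_unfold)
qed

lemma probS_conv_words:
  "probS m n Smin Smax F A =
     (\<Sum>ks\<in>words m n. of_bool (sort (map (Spt m Smin Smax) ks) \<in> A) * prod_list (map F ks))"
  unfolding probS_def words_def by (intro sum.cong) auto

definition pushforward :: "nat \<Rightarrow> (nat \<Rightarrow> nat) \<Rightarrow> (nat \<Rightarrow> real) \<Rightarrow> nat \<Rightarrow> real" where
  "pushforward m p F j = (\<Sum>k | k < m \<and> p k = j. F k)"

context
  fixes m :: nat and p :: "nat \<Rightarrow> nat"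
  assumes p_range: "\<And>k. k < m \<Longrightarrow> p k < m"
begin

lemma sum_pushforward: "(\<Sum>j<m. pushforward m p F j * h j) = (\<Sum>k<m. F k * h (p k))"
proof -
  have "(\<Sum>j<m. pushforward m p F j * h j) = (\<Sum>j<m. \<Sum>k | k \<in> {..<m} \<and> p k = j. F k * h (p k))"
    unfolding pushforward_def sum_distrib_right by (intro sum.cong) auto
  also have "\<dots> = (\<Sum>k<m. F k * h (p k))"
    by (rule sum.group) (use p_range in auto)
  finally show ?thesis .
qed

text \<open>A sample from the pushforward of F along p is distributed as the image under p of a
  sample from F.\<close>
lemma sum_words_pushforward:
  "(\<Sum>ks\<in>words m n. g ks * prod_list (map (pushforward m p F) ks))
     = (\<Sum>ks\<in>words m n. g (map p ks) * prod_list (map F ks))"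
proof (induction n arbitrary: g)
  case 0
  then show ?case by (simp add: words_def)
next
  case (Suc n)
  have "(\<Sum>ks\<in>words m (Suc n). g ks * prod_list (map (pushforward m p F) ks))
      = (\<Sum>k<m. pushforward m p F k *
           (\<Sum>ks\<in>words m n. g (k # ks) * prod_list (map (pushforward m p F) ks)))"
    unfolding sum_words_Suc by (simp add: sum_distrib_left mult_ac)
  also have "\<dots> = (\<Sum>k<m. pushforward m p F k *
                    (\<Sum>ks\<in>words m n. g (k # map p ks) * prod_list (map F ks)))"
    using Suc[of "\<lambda>ks. g (_ # ks)"] by simp
  also have "\<dots> = (\<Sum>k<m. F k * (\<Sum>ks\<in>words m n. g (p k # map p ks) * prod_list (map F ks)))"
    by (rule sum_pushforward)
  also have "\<dots> = (\<Sum>ks\<in>words m (Suc n). g (map p ks) * prod_list (map F ks))"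
    unfolding sum_words_Suc by (simp add: sum_distrib_left mult_ac)
  finally show ?case .
qed

lemma pushforward_in_DistsC:
  assumes "F \<in> Dists m" and "\<And>k. k < m \<Longrightarrow> Spt m Smin Smax (p k) \<in> D"
  shows "pushforward m p F \<in> DistsC m Smin Smax D"
proof -
  have "(\<Sum>j<m. pushforward m p F j) = (\<Sum>k<m. F k)"
    using sum_pushforward[of F "\<lambda>_. 1"] by simp
  moreover have "pushforward m p F j = 0" if "j \<ge> m \<or> Spt m Smin Smax j \<notin> D" for j
  proof -
    have "{k. k < m \<and> p k = j} = {}" using that p_range assms(2) by fastforce
    then show ?thesis unfolding pushforward_def by (simp only: sum.empty)
  qed
  moreover have "0 \<le> pushforward m p F j" for j
    unfolding pushforward_def using assms(1) by (intro sum_nonneg) (auto simp: Dists_def)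
  ultimately show ?thesis using assms(1) unfolding DistsC_def Dists_def by auto
qed

lemma probS_pushforward_ge:
  assumes "F \<in> Dists m"
    and "\<And>ks. ks \<in> words m n \<Longrightarrow> sort (map (Spt m Smin Smax) ks) \<in> A
           \<Longrightarrow> sort (map (Spt m Smin Smax) (map p ks)) \<in> A"
  shows "probS m n Smin Smax F A \<le> probS m n Smin Smax (pushforward m p F) A"
  unfolding probS_conv_words sum_words_pushforward
proof (rule sum_mono)
  fix ks assume ks: "ks \<in> words m n"
  have "0 \<le> prod_list (map F ks)"
    using ks assms(1) by (intro prod_list_nonneg) (auto simp: words_def Dists_def)
  then show "of_bool (sort (map (Spt m Smin Smax) ks) \<in> A) * prod_list (map F ks)
      \<le> of_bool (sort (map (Spt m Smin Smax) (map p ks)) \<in> A) * prod_list (map F ks)"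
    using assms(2)[OF ks] by (auto intro: mult_right_mono)
qed

lemma pushforward_Gset_subset_GsetC:
  assumes "\<And>k. k < m \<Longrightarrow> Spt m Smin Smax (p k) \<in> D"
    and "\<And>ks. ks \<in> words m n \<Longrightarrow> sort (map (Spt m Smin Smax) ks) \<in> A
           \<Longrightarrow> sort (map (Spt m Smin Smax) (map p ks)) \<in> A"
  shows "pushforward m p ` Gset m n Smin Smax A \<alpha> \<subseteq> GsetC m n Smin Smax D A \<alpha>"
proof safe
  fix F assume "F \<in> Gset m n Smin Smax A \<alpha>"
  then have F: "F \<in> Dists m" "\<alpha> < probS m n Smin Smax F A"
    by (auto simp: Gset_def)
  have "probS m n Smin Smax F A \<le> probS m n Smin Smax (pushforward m p F) A"
    using F(1) assms(2) by (rule probS_pushforward_ge)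
  moreover have "pushforward m p F \<in> DistsC m Smin Smax D"
    using F(1) assms(1) by (rule pushforward_in_DistsC)
  ultimately show "pushforward m p F \<in> GsetC m n Smin Smax D A \<alpha>"
    using F(2) by (simp add: GsetC_def Gset_def DistsC_def)
qed

end

lemma strict_mono_Spt:
  assumes "m \<ge> 2" "Smin < Smax"
  shows "strict_mono (Spt m Smin Smax)"
proof (rule strict_monoI)
  fix i j :: nat assume "i < j"
  with assms have "real i * (Smax - Smin) / (real m - 1) < real j * (Smax - Smin) / (real m - 1)"
    by (intro divide_strict_right_mono) auto
  then show "Spt m Smin Smax i < Spt m Smin Smax j" by (simp add: Spt_def)
qed

lemma mean_pushforward_le:
  assumes "m \<ge> 2" "Smin < Smax" "F \<in> Dists m" "\<And>k. p k \<le> k"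
  shows "mean m Smin Smax (pushforward m p F) \<le> mean m Smin Smax F"
proof -
  have "mean m Smin Smax (pushforward m p F) = (\<Sum>k<m. F k * Spt m Smin Smax (p k))"
    unfolding mean_def by (rule sum_pushforward) (use assms(4) le_less_trans in blast)
  also have "\<dots> \<le> mean m Smin Smax F"
    unfolding mean_def using assms strict_mono_mono[OF strict_mono_Spt[OF assms(1,2)]]
    by (intro sum_mono mult_left_mono) (auto simp: Dists_def monoD)
  finally show ?thesis .
qed

lemma continuous_on_coordinate: "continuous_on S (\<lambda>F. F k)"
  by (rule continuous_on_subset[OF continuous_on_product_coordinates]) simp

lemma continuous_on_pushforward: "continuous_on S (pushforward m p)"
  unfolding pushforward_def[abs_def]
  by (intro continuous_on_coordinatewise_then_product continuous_on_sum continuous_on_coordinate)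

lemma continuous_on_mean: "continuous_on S (mean m Smin Smax)"
  unfolding mean_def[abs_def]
  by (intro continuous_on_sum continuous_on_mult_right continuous_on_coordinate)

lemma compact_Dists: "compact (Dists m)"
proof -
  have "Dists m = (\<Pi>\<^sub>E k\<in>UNIV. if k < m then {0..1} else {0}) \<inter>
                  {F. (\<Sum>k<m. F k) = 1} \<inter> (\<Inter>k. {F. 0 \<le> F k})"
  proof (intro equalityI subsetI)
    fix F assume F: "F \<in> Dists m"
    then have "F k \<le> 1" if "k < m" for k
      using member_le_sum[of k "{..<m}" F] that by (auto simp: Dists_def)
    moreover have "0 \<le> F k" for k
      using F by (cases "k < m") (auto simp: Dists_def)
    ultimately show "F \<in> (\<Pi>\<^sub>E k\<in>UNIV. if k < m then {0..1} else {0}) \<inter>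
                  {F. (\<Sum>k<m. F k) = 1} \<inter> (\<Inter>k. {F. 0 \<le> F k})"
      using F by (auto simp: Dists_def)
  qed (auto simp: Dists_def PiE_def Pi_def not_less split: if_splits)
  moreover have "compact (\<Pi>\<^sub>E k\<in>UNIV. if k < m then {0..1::real} else {0})"
    unfolding compactin_euclidean_iff[symmetric] euclidean_product_topology[symmetric]
    by (subst compactin_PiE) auto
  moreover have "closed {F::nat \<Rightarrow> real. (\<Sum>k<m. F k) = 1}" "closed {F::nat \<Rightarrow> real. 0 \<le> F k}" for k
    by (intro closed_Collect_eq closed_Collect_le continuous_on_sum continuous_on_const
          continuous_on_coordinate)+
  ultimately show ?thesis by (metis compact_Int_closed closed_INT)
qed

lemma closure_Gset_subset_Dists: "closure (Gset m n Smin Smax A \<alpha>) \<subseteq> Dists m"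
  by (rule closure_minimal) (auto simp: Gset_def compact_imp_closed compact_Dists)

lemma compact_closure_Gset: "compact (closure (Gset m n Smin Smax A \<alpha>))"
  using compact_Int_closed[OF compact_Dists closed_closure] closure_Gset_subset_Dists
  by (metis Int_absorb1)

lemma Inf_closure_attained_in_image_closure:
  fixes f :: "'a::topological_space \<Rightarrow> real"
  assumes "compact (closure G)" "G \<noteq> {}"
    and "continuous_on (closure G) f" "continuous_on (closure G) r"
    and "r ` G \<subseteq> H" "H \<subseteq> G" "\<And>x. x \<in> closure G \<Longrightarrow> f (r x) \<le> f x"
  shows "Inf (f ` closure G) \<in> f ` closure H \<and> (\<forall>y\<in>closure H. Inf (f ` closure G) \<le> f y)"
proof -
  obtain x0 where x0: "x0 \<in> closure G" "\<And>x. x \<in> closure G \<Longrightarrow> f x0 \<le> f x"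
    using continuous_attains_inf[OF assms(1) _ assms(3)] assms(2) by auto
  have Inf_eq: "Inf (f ` closure G) = f x0"
    using x0 by (intro cInf_eq_minimum) auto
  have HG: "closure H \<subseteq> closure G"
    using assms(6) by (rule closure_mono)
  have "r ` closure G \<subseteq> closure H"
    using assms(4,5) closure_subset by (intro image_closure_subset) auto
  then have "r x0 \<in> closure H" using x0(1) by blast
  moreover have "f (r x0) = f x0"
    using assms(7) x0 \<open>r x0 \<in> closure H\<close> HG by (meson order_antisym subsetD)
  ultimately show ?thesis
    unfolding Inf_eq using x0(2) HG by (metis image_eqI subsetD)
qed

lemma point_mass_top_in_Gset:
  assumes "m \<ge> 2" "Smin < Smax" "xs \<in> Samples m n Smin Smax" "\<alpha> < 1"
  shows "(\<lambda>k. of_bool (k = m - 1)) \<in> Gset m n Smin Smax (OmegaT m n Smin Smax xs) \<alpha>"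
proof -
  define T where "T = m - 1"
  define top_sample where "top_sample = replicate n (Spt m Smin Smax T)"
  have "T < m" using assms(1) by (simp add: T_def)
  have point_mass_prod:
    "prod_list (map (\<lambda>k. of_bool (k = T)) ks) = (of_bool (ks = replicate (length ks) T) :: real)"
    for ks by (induction ks) auto
  have "x \<le> Spt m Smin Smax T" if "x \<in> set xs" for x
    using that assms(3) strict_mono_mono[OF strict_mono_Spt[OF assms(1,2)]]
    by (auto simp: Samples_def Sset_def T_def monoD)
  then have "lowlex_le xs top_sample"
    using lowlex_le_replicate assms(3) by (fastforce simp: top_sample_def Samples_def)
  moreover have "top_sample \<in> Samples m n Smin Smax"
    using \<open>T < m\<close> by (auto simp: top_sample_def Samples_def Sset_def)
  ultimately have top_in: "sort (map (Spt m Smin Smax) (replicate n T)) \<in> OmegaT m n Smin Smax xs"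
    by (simp add: OmegaT_def top_sample_def)
  have "probS m n Smin Smax (\<lambda>k. of_bool (k = T)) (OmegaT m n Smin Smax xs)
      = (\<Sum>ks\<in>words m n. if ks = replicate n T
           then of_bool (sort (map (Spt m Smin Smax) ks) \<in> OmegaT m n Smin Smax xs) else 0)"
    unfolding probS_conv_words point_mass_prod by (intro sum.cong) (auto simp: words_def)
  also have "\<dots> = 1"
  proof -
    have "replicate n T \<in> words m n"
      using \<open>T < m\<close> by (auto simp: words_def set_replicate_conv_if)
    then show ?thesis using top_in by (simp add: sum.delta' finite_words)
  qed
  finally have "probS m n Smin Smax (\<lambda>k. of_bool (k = T)) (OmegaT m n Smin Smax xs) = 1" .
  then show ?thesis
    using \<open>T < m\<close> assms(4) by (auto simp: Gset_def Dists_def T_def)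
qed

definition floor_Cplus :: "nat \<Rightarrow> real \<Rightarrow> real \<Rightarrow> real set \<Rightarrow> nat \<Rightarrow> nat" where
  "floor_Cplus m Smin Smax C = round_down (\<lambda>j. Spt m Smin Smax j \<in> Cplus m Smin Smax C)"

lemma Spt_0_in_Cplus: "Spt m Smin Smax 0 \<in> Cplus m Smin Smax C"
  by (simp add: Cplus_def Spt_def)

lemma floor_Cplus_le: "floor_Cplus m Smin Smax C k \<le> k"
  unfolding floor_Cplus_def by (rule round_down_le) (rule Spt_0_in_Cplus)

lemma Spt_floor_Cplus_in_Cplus: "Spt m Smin Smax (floor_Cplus m Smin Smax C k) \<in> Cplus m Smin Smax C"
  unfolding floor_Cplus_def by (rule round_down_sat[where P = "\<lambda>j. Spt m Smin Smax j \<in> _"])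
    (rule Spt_0_in_Cplus)

lemma mono_floor_Cplus: "mono (floor_Cplus m Smin Smax C)"
  unfolding floor_Cplus_def by (rule mono_round_down) (rule Spt_0_in_Cplus)

lemma floor_Cplus_fixed: "Spt m Smin Smax k \<in> C \<Longrightarrow> floor_Cplus m Smin Smax C k = k"
  unfolding floor_Cplus_def using Spt_0_in_Cplus by (rule round_down_fixed) (simp add: Cplus_def)

lemma Spt_less_Spt_floor_Cplus:
  assumes "m \<ge> 2" "Smin < Smax" "Spt m Smin Smax k \<in> C" "k < z" "z < m"
  shows "Spt m Smin Smax k < Spt m Smin Smax (floor_Cplus m Smin Smax C z)"
proof -
  have S: "strict_mono (Spt m Smin Smax)"
    using assms(1,2) by (rule strict_mono_Spt)
  have "Spt m Smin Smax (Suc k) \<in> Cplus m Smin Smax C"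
    using assms(3-5) by (auto simp: Cplus_def)
  then have "Suc k \<le> floor_Cplus m Smin Smax C z"
    unfolding floor_Cplus_def using Spt_0_in_Cplus le_round_down assms(4) by simp
  then show ?thesis
    using S by (metis Suc_le_eq strict_mono_less)
qed

lemma floor_Cplus_preserves_OmegaT:
  fixes m n :: nat and Smin Smax :: real and xs :: "real list"
  defines "S \<equiv> Spt m Smin Smax" and "p \<equiv> floor_Cplus m Smin Smax (set xs)"
  assumes m: "m \<ge> 2" and Smin_Smax: "Smin < Smax" and xs: "xs \<in> Samples m n Smin Smax"
    and ks: "ks \<in> words m n" and ks_in: "sort (map S ks) \<in> OmegaT m n Smin Smax xs"
  shows "sort (map S (map p ks)) \<in> OmegaT m n Smin Smax xs"
proof -
  define zs where "zs = sort ks"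
  have "strict_mono S"
    unfolding S_def using m Smin_Smax by (rule strict_mono_Spt)
  then have "mono (S \<circ> p)"
    using mono_floor_Cplus unfolding p_def by (metis monoD monoI strict_mono_mono comp_apply)
  have zs: "length zs = n" "set zs \<subseteq> {..<m}"
    using ks by (auto simp: zs_def words_def)
  have xs_props: "length xs = n" "set xs \<subseteq> S ` {..<m}"
    using xs by (auto simp: Samples_def Sset_def S_def)
  have "lowlex_le xs (map S zs)"
    using ks_in sort_map_mono[OF strict_mono_mono[OF \<open>strict_mono S\<close>]]
    by (simp add: OmegaT_def zs_def)
  then have "lowlex_le xs (map (S \<circ> p) zs)"
  proof (rule lowlex_le_map_replace)
    show "length xs = length zs" using zs xs_props by simp
  next
    fix x z assume "x \<in> set xs" "x = S z"
    then show "(S \<circ> p) z = S z"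
      using floor_Cplus_fixed by (simp add: p_def S_def)
  next
    fix x z assume x: "x \<in> set xs" and z: "z \<in> set zs" and "x < S z"
    obtain k where k: "x = S k" using x xs_props by auto
    then have "k < z" using \<open>x < S z\<close> \<open>strict_mono S\<close> by (simp add: strict_mono_less)
    then show "x < (S \<circ> p) z"
      using Spt_less_Spt_floor_Cplus[OF m Smin_Smax] x z zs k by (auto simp: S_def p_def)
  qed
  moreover have "map (S \<circ> p) zs \<in> Samples m n Smin Smax"
  proof -
    have "p z < m" if "z \<in> set zs" for z
      using that zs floor_Cplus_le[of m Smin Smax "set xs" z] by (auto simp: p_def)
    moreover have "sorted (map (S \<circ> p) zs)"
      using \<open>mono (S \<circ> p)\<close> by (simp add: zs_def sorted_map_mono mono_on_def monoD)
    ultimately show ?thesis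
      using zs by (auto simp: Samples_def Sset_def S_def)
  qed
  ultimately show ?thesis
    using sort_map_mono[OF \<open>mono (S \<circ> p)\<close>] by (simp add: OmegaT_def zs_def)
qed

theorem theorem7:
  fixes m n :: nat and Smin Smax \<alpha> :: real and xs :: "real list"
  assumes "m \<ge> 2" and "n \<ge> 1" and "Smin < Smax"
    and "xs \<in> Samples m n Smin Smax"
    and "0 \<le> \<alpha>" and "\<alpha> < 1"
  defines "C \<equiv> set xs"
  shows "Bstar m n Smin Smax \<alpha> xs \<in>
           mean m Smin Smax ` FsetC m n Smin Smax (Cplus m Smin Smax C) (OmegaT m n Smin Smax xs) \<alpha>
       \<and> (\<forall>F \<in> FsetC m n Smin Smax (Cplus m Smin Smax C) (OmegaT m n Smin Smax xs) \<alpha>.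
            Bstar m n Smin Smax \<alpha> xs \<le> mean m Smin Smax F)"
proof -
  define A where "A = OmegaT m n Smin Smax xs"
  define G where "G = Gset m n Smin Smax A \<alpha>"
  define p where "p = floor_Cplus m Smin Smax C"
  have p_range: "k < m \<Longrightarrow> p k < m" for k
    using floor_Cplus_le[of m Smin Smax C k] by (simp add: p_def)
  have "pushforward m p ` G \<subseteq> GsetC m n Smin Smax (Cplus m Smin Smax C) A \<alpha>"
    unfolding G_def
  proof (rule pushforward_Gset_subset_GsetC[OF p_range])
    show "Spt m Smin Smax (p k) \<in> Cplus m Smin Smax C" for k
      by (simp add: p_def Spt_floor_Cplus_in_Cplus)
    show "sort (map (Spt m Smin Smax) (map p ks)) \<in> A"
      if "ks \<in> words m n" "sort (map (Spt m Smin Smax) ks) \<in> A" for ks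
      using floor_Cplus_preserves_OmegaT[OF assms(1,3,4) that[unfolded A_def]]
      by (simp add: A_def p_def C_def)
  qed
  moreover have "G \<noteq> {}"
    using point_mass_top_in_Gset[OF assms(1,3,4,6)] by (auto simp: G_def A_def)
  moreover have "GsetC m n Smin Smax (Cplus m Smin Smax C) A \<alpha> \<subseteq> G"
    by (auto simp: GsetC_def G_def)
  moreover have "mean m Smin Smax (pushforward m p F) \<le> mean m Smin Smax F" if "F \<in> closure G" for F
    using assms(1,3) closure_Gset_subset_Dists that floor_Cplus_le
    by (intro mean_pushforward_le) (auto simp: G_def p_def subset_iff)
  ultimately show ?thesis
    unfolding Bstar_def Fset_def FsetC_def A_def[symmetric] G_def[symmetric]
    using Inf_closure_attained_in_image_closure[OF compact_closure_Gset _ continuous_on_mean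
        continuous_on_pushforward] by (metis G_def)
qed

end
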